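(* Let $(\Sigma,E)$ be an algebraic theory with free monad $(T,\eta,\mu)$. For every $T$-semialgebra $\alpha:TX\to X$, the $\Sigma^{\mathrm{s}}$-algebra $G(X,\alpha)=(X,I)$ with $I(\mathsf{a})=\alpha\circ\eta_X$ and $I(\mathsf{op})=\alpha\circ\mathsf{op}^{TX}\circ(\eta_X)^n$ for $(\mathsf{op}:n)\in\Sigma$ is a $(\Sigma^{\mathrm{s}},E^{\mathrm{s}})$-algebra, i.e. it satisfies all equations of $E^{\mathrm{s}}$.
   Context: $T=T_{\Sigma,E}$: $TX$ is the set of $\Sigma$-terms over $X$ modulo the smallest congruence containing substitution instances of $E$, with $\mathsf{op}^{TX}(\overline{t_1},\dots,\overline{t_n})=\overline{\mathsf{op}(t_1,\dots,t_n)}$, $\eta_X(x)=\overline{x}$ and $\mu_X$ flattening terms. A $T$-semialgebra is $\alpha:TX\to X$ with $\alpha\circ\mu_X=\alpha\circ T\alpha$. The theory $(\Sigma^{\mathrm{s}},E^{\mathrm{s}})$: $\Sigma^{\mathrm{s}}=\Sigma\uplus\{\mathsf{a}:1\}$ and $E^{\mathrm{s}}$ consists of $\mathsf{a}\mathsf{a}v_1=\mathsf{a}v_1$; $\mathsf{a}(\mathsf{op}(v_1,\dots,v_n))=\mathsf{op}(v_1,\dots,v_n)$ and $\mathsf{op}(\mathsf{a}v_1,\dots,\mathsf{a}v_n)=\mathsf{op}(v_1,\dots,v_n)$ for every $(\mathsf{op}:n)\in\Sigma$; and $t(\mathsf{a}v_1,\dots,\mathsf{a}v_n)=s(\mathsf{a}v_1,\dots,\mathsf{a}v_n)$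 for every equation $t(v_1,\dots,v_n)=s(v_1,\dots,v_n)$ in $E$. *)

theory Defs
  imports Main
begin

text \<open>A signature is a type of operation symbols 'f together with an arity map
  ar :: 'f => nat.  Terms over variables of type 'v:\<close>

datatype ('f, 'v) trm = Var 'v | Op 'f "('f, 'v) trm list"

fun wf :: "('f \<Rightarrow> nat) \<Rightarrow> ('f, 'v) trm \<Rightarrow> bool" where
  "wf ar (Var v) = True"
| "wf ar (Op f ts) = (length ts = ar f \<and> (\<forall>t\<in>set ts. wf ar t))"

fun vars :: "('f, 'v) trm \<Rightarrow> 'v set" where
  "vars (Var v) = {v}"
| "vars (Op f ts) = (\<Union>t\<in>set ts. vars t)"

fun subst :: "('v \<Rightarrow> ('f, 'w) trm) \<Rightarrow> ('f, 'v) trm \<Rightarrow> ('f, 'w) trm" where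
  "subst \<sigma> (Var v) = \<sigma> v"
| "subst \<sigma> (Op f ts) = Op f (map (subst \<sigma>) ts)"

fun vmap :: "('v \<Rightarrow> 'w) \<Rightarrow> ('f, 'v) trm \<Rightarrow> ('f, 'w) trm" where
  "vmap g (Var v) = Var (g v)"
| "vmap g (Op f ts) = Op f (map (vmap g) ts)"

fun eval :: "('f \<Rightarrow> 'x list \<Rightarrow> 'x) \<Rightarrow> ('v \<Rightarrow> 'x) \<Rightarrow> ('f, 'v) trm \<Rightarrow> 'x" where
  "eval I \<rho> (Var v) = \<rho> v"
| "eval I \<rho> (Op f ts) = I f (map (eval I \<rho>) ts)"

definition terms :: "('f \<Rightarrow> nat) \<Rightarrow> 'x set \<Rightarrow> ('f, 'x) trm set" where
  "terms ar X = {t. wf ar t \<and> vars t \<subseteq> X}"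

text \<open>Equations of E are pairs of terms over the variables v_1, v_2, ... (type nat).
  eqv ar E X is the smallest congruence on terms over X containing all
  substitution instances of equations in E.\<close>

inductive eqv :: "('f \<Rightarrow> nat) \<Rightarrow> (('f, nat) trm \<times> ('f, nat) trm) set \<Rightarrow> 'x set
    \<Rightarrow> ('f, 'x) trm \<Rightarrow> ('f, 'x) trm \<Rightarrow> bool"
  for ar E X where
  inst: "(l, r) \<in> E \<Longrightarrow> subst \<sigma> l \<in> terms ar X \<Longrightarrow> subst \<sigma> r \<in> terms ar X
          \<Longrightarrow> eqv ar E X (subst \<sigma> l) (subst \<sigma> r)"
| refl: "t \<in> terms ar X \<Longrightarrow> eqv ar E X t t"
| sym: "eqv ar E X s t \<Longrightarrow> eqv ar E X t s"
| trans: "eqv ar E X s t \<Longrightarrow> eqv ar E X t u \<Longrightarrow> eqv ar E X s u"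
| cong: "length ts = ar f \<Longrightarrow> length us = ar f
          \<Longrightarrow> (\<forall>i<length ts. eqv ar E X (ts ! i) (us ! i))
          \<Longrightarrow> eqv ar E X (Op f ts) (Op f us)"

definition eqrel :: "('f \<Rightarrow> nat) \<Rightarrow> (('f, nat) trm \<times> ('f, nat) trm) set \<Rightarrow> 'x set
    \<Rightarrow> (('f, 'x) trm \<times> ('f, 'x) trm) set" where
  "eqrel ar E X = {(s, t). eqv ar E X s t}"

definition Tset :: "('f \<Rightarrow> nat) \<Rightarrow> (('f, nat) trm \<times> ('f, nat) trm) set \<Rightarrow> 'x set
    \<Rightarrow> ('f, 'x) trm set set" where
  "Tset ar E X = terms ar X // eqrel ar E X"

definition cls :: "('f \<Rightarrow> nat) \<Rightarrow> (('f, nat) trm \<times> ('f, nat) trm) set \<Rightarrow> 'x set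
    \<Rightarrow> ('f, 'x) trm \<Rightarrow> ('f, 'x) trm set" where
  "cls ar E X t = eqrel ar E X `` {t}"

definition rep :: "'a set \<Rightarrow> 'a" where
  "rep C = (SOME t. t \<in> C)"

text \<open>Unit eta_X, operations op^{TX}, multiplication mu_X and the functor action T g.
  All are defined via (arbitrary) representatives; they are well defined.\<close>
definition eta :: "('f \<Rightarrow> nat) \<Rightarrow> (('f, nat) trm \<times> ('f, nat) trm) set \<Rightarrow> 'x set
    \<Rightarrow> 'x \<Rightarrow> ('f, 'x) trm set" where
  "eta ar E X x = cls ar E X (Var x)"

definition opT :: "('f \<Rightarrow> nat) \<Rightarrow> (('f, nat) trm \<times> ('f, nat) trm) set \<Rightarrow> 'x set
    \<Rightarrow> 'f \<Rightarrow> ('f, 'x) trm set list \<Rightarrow> ('f, 'x) trm set" where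
  "opT ar E X f cs = cls ar E X (Op f (map rep cs))"

definition mu :: "('f \<Rightarrow> nat) \<Rightarrow> (('f, nat) trm \<times> ('f, nat) trm) set \<Rightarrow> 'x set
    \<Rightarrow> ('f, ('f, 'x) trm set) trm set \<Rightarrow> ('f, 'x) trm set" where
  "mu ar E X C = cls ar E X (subst rep (rep C))"

definition Tmap :: "('f \<Rightarrow> nat) \<Rightarrow> (('f, nat) trm \<times> ('f, nat) trm) set \<Rightarrow> 'y set
    \<Rightarrow> ('x \<Rightarrow> 'y) \<Rightarrow> ('f, 'x) trm set \<Rightarrow> ('f, 'y) trm set" where
  "Tmap ar E Y g C = cls ar E Y (vmap g (rep C))"

definition semialgebra :: "('f \<Rightarrow> nat) \<Rightarrow> (('f, nat) trm \<times> ('f, nat) trm) set \<Rightarrow> 'x set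
    \<Rightarrow> (('f, 'x) trm set \<Rightarrow> 'x) \<Rightarrow> bool" where
  "semialgebra ar E X \<alpha> \<longleftrightarrow>
     (\<forall>C\<in>Tset ar E X. \<alpha> C \<in> X) \<and>
     (\<forall>C\<in>Tset ar E (Tset ar E X).
        \<alpha> (mu ar E X C) = \<alpha> (Tmap ar E X \<alpha> C))"

text \<open>Sigma^s = Sigma + {a : 1}: None is the new unary symbol a, Some f is f.\<close>
definition ars :: "('f \<Rightarrow> nat) \<Rightarrow> 'f option \<Rightarrow> nat" where
  "ars ar s = (case s of None \<Rightarrow> 1 | Some f \<Rightarrow> ar f)"

definition A :: "('f option, 'v) trm \<Rightarrow> ('f option, 'v) trm" where
  "A t = Op None [t]"

fun emb :: "('f, 'v) trm \<Rightarrow> ('f option, 'v) trm" where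
  "emb (Var v) = Var v"
| "emb (Op f ts) = Op (Some f) (map emb ts)"

definition Es :: "('f \<Rightarrow> nat) \<Rightarrow> (('f, nat) trm \<times> ('f, nat) trm) set
    \<Rightarrow> (('f option, nat) trm \<times> ('f option, nat) trm) set" where
  "Es ar E =
     {(A (A (Var 0)), A (Var 0))}
   \<union> {(A (Op (Some f) (map Var [0..<ar f])), Op (Some f) (map Var [0..<ar f])) | f. True}
   \<union> {(Op (Some f) (map (\<lambda>i. A (Var i)) [0..<ar f]), Op (Some f) (map Var [0..<ar f])) | f. True}
   \<union> {(subst (\<lambda>v. A (Var v)) (emb l), subst (\<lambda>v. A (Var v)) (emb r)) | l r. (l, r) \<in> E}"

definition Gint :: "('f \<Rightarrow> nat) \<Rightarrow> (('f, nat) trm \<times> ('f, nat) trm) set \<Rightarrow> 'x set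
    \<Rightarrow> (('f, 'x) trm set \<Rightarrow> 'x) \<Rightarrow> 'f option \<Rightarrow> 'x list \<Rightarrow> 'x" where
  "Gint ar E X \<alpha> s xs = (case s of
      None \<Rightarrow> \<alpha> (eta ar E X (hd xs))
    | Some f \<Rightarrow> \<alpha> (opT ar E X f (map (eta ar E X) xs)))"

definition is_model :: "('g \<Rightarrow> nat) \<Rightarrow> (('g, nat) trm \<times> ('g, nat) trm) set \<Rightarrow> 'x set
    \<Rightarrow> ('g \<Rightarrow> 'x list \<Rightarrow> 'x) \<Rightarrow> bool" where
  "is_model ar Eq X I \<longleftrightarrow>
     (\<forall>f xs. length xs = ar f \<longrightarrow> set xs \<subseteq> X \<longrightarrow> I f xs \<in> X) \<and>
     (\<forall>(l, r)\<in>Eq. \<forall>\<rho>. (\<forall>v. \<rho> v \<in> X) \<longrightarrow> eval I \<rho> l = eval I \<rho> r)"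

end

theory Submission
  imports Defs
begin

(* Write [t] for the class of a term t in TX.  For a term u over TX, the semialgebra law
   alpha o mu = alpha o T alpha says that alpha [u with each leaf c replaced by a representative of c]
   equals alpha [u with each leaf c replaced by the variable alpha c].  Hence alpha o eta fixes every
   value alpha c; since every operation of G(X, alpha) yields such a value, a absorbs both itself and
   the operations.  Guarding all variables of an embedded term t by a turns the valuation rho into
   alpha o eta o rho, and induction on t with the same law evaluates the result to alpha [t rho].  So
   the guarded equations of E hold, as both sides are identified in TX, and
   op(a v_1, ..., a v_n) = op(v_1, ..., v_n) is the case t = op(v_1, ..., v_n). *)

lemma subst_subst: "subst \<sigma> (subst \<tau> t) = subst (\<lambda>v. subst \<sigma> (\<tau> v)) t"
  by (induction t) auto

lemma vmap_eq_subst: "vmap g t = subst (\<lambda>v. Var (g v)) t"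
  by (induction t) auto

lemma eval_subst: "eval I \<rho> (subst \<sigma> t) = eval I (\<lambda>v. eval I \<rho> (\<sigma> v)) t"
  by (induction t) (simp_all add: comp_def cong: map_cong)

lemma Var_in_terms: "x \<in> X \<Longrightarrow> Var x \<in> terms ar X"
  by (simp add: terms_def)

lemma subst_in_terms:
  assumes "t \<in> terms ar X" and "\<And>v. v \<in> X \<Longrightarrow> \<sigma> v \<in> terms ar Y"
  shows "subst \<sigma> t \<in> terms ar Y"
  using assms by (induction t) (fastforce simp: terms_def)+

lemma subst_Var_in_terms:
  "wf ar t \<Longrightarrow> (\<And>v. \<rho> v \<in> X) \<Longrightarrow> subst (\<lambda>v. Var (\<rho> v)) t \<in> terms ar X"
  by (induction t) (auto simp: terms_def)

lemma eqv_in_terms: "eqv ar E X s t \<Longrightarrow> s \<in> terms ar X \<and> t \<in> terms ar X"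
proof (induction rule: eqv.induct)
  case (cong ts f us)
  then show ?case
    by (auto simp: terms_def in_set_conv_nth) blast+
qed auto

lemma eqv_subst:
  assumes "eqv ar E X s t" and "\<And>v. v \<in> X \<Longrightarrow> \<sigma> v \<in> terms ar Y"
  shows "eqv ar E Y (subst \<sigma> s) (subst \<sigma> t)"
  using assms
proof (induction rule: eqv.induct)
  case (inst l r \<tau>)
  have "subst \<sigma> (subst \<tau> l) \<in> terms ar Y" and "subst \<sigma> (subst \<tau> r) \<in> terms ar Y"
    using inst.hyps(2,3) inst.prems by (blast intro: subst_in_terms)+
  then show ?case
    using eqv.inst[OF inst.hyps(1)] by (simp add: subst_subst)
next
  case (refl t)
  then show ?case
    by (blast intro: eqv.refl subst_in_terms)
next
  case (cong ts f us)
  then show ?case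
    by (auto intro: eqv.cong)
qed (blast intro: eqv.sym eqv.trans)+

lemma cls_eqI: "eqv ar E X s t \<Longrightarrow> cls ar E X s = cls ar E X t"
  unfolding cls_def eqrel_def by (auto intro: eqv.trans eqv.sym)

lemma eqv_rep_cls:
  assumes "t \<in> terms ar X"
  shows "eqv ar E X t (rep (cls ar E X t))"
proof -
  have "t \<in> cls ar E X t"
    using assms by (simp add: cls_def eqrel_def eqv.refl)
  then have "rep (cls ar E X t) \<in> cls ar E X t"
    unfolding rep_def by (rule someI)
  then show ?thesis
    by (simp add: cls_def eqrel_def)
qed

lemma cls_in_Tset: "t \<in> terms ar X \<Longrightarrow> cls ar E X t \<in> Tset ar E X"
  unfolding Tset_def cls_def by (rule quotientI)

lemma Tset_cases:
  assumes "C \<in> Tset ar E X"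
  obtains t where "t \<in> terms ar X" and "C = cls ar E X t"
  using assms unfolding Tset_def cls_def by (auto elim: quotientE)

lemma rep_in_terms: "C \<in> Tset ar E X \<Longrightarrow> rep C \<in> terms ar X"
  by (metis Tset_cases eqv_rep_cls eqv_in_terms)

lemma cls_rep: "C \<in> Tset ar E X \<Longrightarrow> cls ar E X (rep C) = C"
  by (metis Tset_cases eqv_rep_cls cls_eqI eqv.sym)

lemma eta_in_Tset: "x \<in> X \<Longrightarrow> eta ar E X x \<in> Tset ar E X"
  unfolding eta_def by (intro cls_in_Tset Var_in_terms)

lemma opT_in_Tset:
  assumes "set cs \<subseteq> Tset ar E X" and "length cs = ar f"
  shows "opT ar E X f cs \<in> Tset ar E X"
proof -
  have "\<forall>C\<in>set cs. rep C \<in> terms ar X"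
    using assms(1) rep_in_terms by blast
  then have "Op f (map rep cs) \<in> terms ar X"
    using assms(2) by (auto simp: terms_def)
  then show ?thesis
    unfolding opT_def by (rule cls_in_Tset)
qed

lemma Gint_Some:
  assumes "set xs \<subseteq> X" and "length xs = ar f"
  shows "Gint ar E X \<alpha> (Some f) xs = \<alpha> (cls ar E X (Op f (map Var xs)))"
proof -
  have "eqv ar E X (Op f (map rep (map (eta ar E X) xs))) (Op f (map Var xs))"
    using assms
    by (intro eqv.cong) (auto simp: eta_def intro!: eqv.sym[OF eqv_rep_cls] Var_in_terms)
  then show ?thesis
    unfolding Gint_def opT_def by (simp add: cls_eqI)
qed

lemma Gint_in_alpha_image:
  assumes "length xs = ars ar s" and "set xs \<subseteq> X"
  shows "Gint ar E X \<alpha> s xs \<in> \<alpha> ` Tset ar E X"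
proof (cases s)
  case None
  with assms obtain x where "xs = [x]" and "x \<in> X"
    by (cases xs) (auto simp: ars_def)
  with None show ?thesis
    by (simp add: Gint_def eta_in_Tset)
next
  case (Some f)
  with assms have "opT ar E X f (map (eta ar E X) xs) \<in> Tset ar E X"
    by (auto simp: ars_def intro!: opT_in_Tset eta_in_Tset)
  with Some show ?thesis
    by (simp add: Gint_def)
qed

locale T_semialgebra =
  fixes ar :: "'f \<Rightarrow> nat"
    and E :: "(('f, nat) trm \<times> ('f, nat) trm) set"
    and X :: "'x set"
    and \<alpha> :: "('f, 'x) trm set \<Rightarrow> 'x"
  assumes semialgebra: "semialgebra ar E X \<alpha>"
begin

lemma alpha_in_X: "C \<in> Tset ar E X \<Longrightarrow> \<alpha> C \<in> X"
  using semialgebra by (simp add: semialgebra_def)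

lemma alpha_cls_subst_rep:
  assumes u: "u \<in> terms ar (Tset ar E X)"
  shows "\<alpha> (cls ar E X (subst rep u)) = \<alpha> (cls ar E X (vmap \<alpha> u))"
proof -
  let ?C = "cls ar E (Tset ar E X) u"
  have rep_C: "eqv ar E (Tset ar E X) (rep ?C) u"
    using eqv_rep_cls[OF u] by (rule eqv.sym)
  have "mu ar E X ?C = cls ar E X (subst rep u)"
    unfolding mu_def using rep_C by (intro cls_eqI eqv_subst rep_in_terms)
  moreover have "Tmap ar E X \<alpha> ?C = cls ar E X (vmap \<alpha> u)"
    unfolding Tmap_def vmap_eq_subst using rep_C by (intro cls_eqI eqv_subst Var_in_terms alpha_in_X)
  moreover have "\<alpha> (mu ar E X ?C) = \<alpha> (Tmap ar E X \<alpha> ?C)"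
    using semialgebra cls_in_Tset[OF u] unfolding semialgebra_def by blast
  ultimately show ?thesis
    by simp
qed

lemma alpha_eta_alpha:
  assumes "C \<in> Tset ar E X"
  shows "\<alpha> (eta ar E X (\<alpha> C)) = \<alpha> C"
  using alpha_cls_subst_rep[of "Var C"] assms
  by (simp add: Var_in_terms cls_rep eta_def)

lemma Gint_closed:
  assumes "length xs = ars ar s" and "set xs \<subseteq> X"
  shows "Gint ar E X \<alpha> s xs \<in> X"
  using Gint_in_alpha_image[OF assms, of E \<alpha>] by (auto intro: alpha_in_X)

lemma Gint_None_absorb:
  assumes "length xs = ars ar s" and "set xs \<subseteq> X"
  shows "Gint ar E X \<alpha> None [Gint ar E X \<alpha> s xs] = Gint ar E X \<alpha> s xs"
  using Gint_in_alpha_image[OF assms, of E \<alpha>] by (auto simp: Gint_def alpha_eta_alpha)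

lemma eval_Gint_emb:
  assumes "wf ar t" and \<rho>: "\<And>v. \<rho> v \<in> X"
  shows "eval (Gint ar E X \<alpha>) (\<lambda>v. \<alpha> (eta ar E X (\<rho> v))) (emb t)
       = \<alpha> (cls ar E X (subst (\<lambda>v. Var (\<rho> v)) t))"
  using assms(1)
proof (induction t)
  case (Var v)
  then show ?case
    by (simp add: eta_def)
next
  case (Op f ts)
  let ?s = "subst (\<lambda>v. Var (\<rho> v))"
  let ?cs = "map (\<lambda>t. cls ar E X (?s t)) ts"
  have s_ts: "?s t \<in> terms ar X" if "t \<in> set ts" for t
    using Op.prems that \<rho> by (simp add: subst_Var_in_terms del: subst.simps)
  then have cs: "set ?cs \<subseteq> Tset ar E X"
    by (auto intro: cls_in_Tset)
  have len: "length ?cs = ar f"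
    using Op.prems by simp
  have "eval (Gint ar E X \<alpha>) (\<lambda>v. \<alpha> (eta ar E X (\<rho> v))) (emb (Op f ts))
      = Gint ar E X \<alpha> (Some f) (map \<alpha> ?cs)"
    using Op.IH Op.prems by (simp add: comp_def cong: map_cong)
  also have "\<dots> = \<alpha> (cls ar E X (vmap \<alpha> (Op f (map Var ?cs))))"
    using cs len alpha_in_X by (subst Gint_Some) (auto simp: comp_def)
  also have "\<dots> = \<alpha> (cls ar E X (subst rep (Op f (map Var ?cs))))"
    using cs len by (intro alpha_cls_subst_rep[symmetric]) (auto simp: terms_def)
  also have "subst rep (Op f (map Var ?cs)) = Op f (map rep ?cs)"
    by (simp add: comp_def)
  also have "cls ar E X (Op f (map rep ?cs)) = cls ar E X (Op f (map ?s ts))"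
    using Op.prems s_ts by (intro cls_eqI eqv.cong) (auto intro!: eqv.sym[OF eqv_rep_cls])
  finally show ?case
    by simp
qed

lemma eval_Gint_guarded:
  assumes "wf ar t" and "\<And>v. \<rho> v \<in> X"
  shows "eval (Gint ar E X \<alpha>) \<rho> (subst (\<lambda>v. A (Var v)) (emb t))
       = \<alpha> (cls ar E X (subst (\<lambda>v. Var (\<rho> v)) t))"
  using eval_Gint_emb[OF assms] by (simp add: eval_subst A_def Gint_def)

lemma Gint_satisfies_Es:
  assumes E_wf: "\<forall>(l, r)\<in>E. wf ar l \<and> wf ar r"
    and lr: "(l, r) \<in> Es ar E" and \<rho>: "\<And>v. \<rho> v \<in> X"
  shows "eval (Gint ar E X \<alpha>) \<rho> l = eval (Gint ar E X \<alpha>) \<rho> r"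
  using lr unfolding Es_def
proof (elim UnE CollectE exE conjE insertE emptyE)
  assume "(l, r) = (A (A (Var 0)), A (Var 0))"
  then show ?thesis
    using Gint_None_absorb[of "[\<rho> 0]" None] \<rho> by (simp add: A_def ars_def)
next
  fix f
  assume "(l, r) = (A (Op (Some f) (map Var [0..<ar f])), Op (Some f) (map Var [0..<ar f]))"
  then show ?thesis
    using Gint_None_absorb[of "map \<rho> [0..<ar f]" "Some f"] \<rho>
    by (auto simp: A_def ars_def comp_def)
next
  fix f
  assume lr_eq: "(l, r) = (Op (Some f) (map (\<lambda>i. A (Var i)) [0..<ar f]), Op (Some f) (map Var [0..<ar f]))"
  then have "eval (Gint ar E X \<alpha>) \<rho> l
      = eval (Gint ar E X \<alpha>) \<rho> (subst (\<lambda>v. A (Var v)) (emb (Op f (map Var [0..<ar f]))))"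
    by (simp add: comp_def)
  also have "\<dots> = \<alpha> (cls ar E X (Op f (map Var (map \<rho> [0..<ar f]))))"
    using \<rho> by (subst eval_Gint_guarded) (simp_all add: comp_def)
  also have "\<dots> = eval (Gint ar E X \<alpha>) \<rho> r"
    using lr_eq \<rho> by (subst Gint_Some[symmetric]) (auto simp: comp_def)
  finally show ?thesis .
next
  fix l0 r0
  assume l0r0: "(l0, r0) \<in> E"
    and lr_eq: "(l, r) = (subst (\<lambda>v. A (Var v)) (emb l0), subst (\<lambda>v. A (Var v)) (emb r0))"
  have wf: "wf ar l0" "wf ar r0"
    using E_wf l0r0 by auto
  then have "eqv ar E X (subst (\<lambda>v. Var (\<rho> v)) l0) (subst (\<lambda>v. Var (\<rho> v)) r0)"
    using l0r0 \<rho> by (intro eqv.inst subst_Var_in_terms)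
  then show ?thesis
    using lr_eq wf \<rho> by (simp add: eval_Gint_guarded cls_eqI)
qed

end

theorem lemma10:
  fixes ar :: "'f \<Rightarrow> nat"
    and E :: "(('f, nat) trm \<times> ('f, nat) trm) set"
    and X :: "'x set"
    and \<alpha> :: "('f, 'x) trm set \<Rightarrow> 'x"
  assumes "\<forall>(l, r)\<in>E. wf ar l \<and> wf ar r"
    and "semialgebra ar E X \<alpha>"
  shows "is_model (ars ar) (Es ar E) X (Gint ar E X \<alpha>)"
proof -
  interpret T_semialgebra ar E X \<alpha>
    using assms(2) by unfold_locales
  show ?thesis
    unfolding is_model_def using Gint_closed Gint_satisfies_Es[OF assms(1)] by blast
qed

end
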